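(* Let $\Pi$ be a $3$-decomposable $30$-half-period with classes $A,B,C$. Then $N_{15}^{bi}(\Pi)=15$.
   Context: An allowable sequence on an $n$-element set is a doubly infinite sequence of permutations of the set (lists on positions $1,\dots,n$) in which consecutive permutations differ by swapping two adjacent elements (a transposition) and $\pi_{i+\binom n2}$ is the reverse of $\pi_i$; an $n$-half-period is a block $(\pi_0,\dots,\pi_{\binom n2})$ of consecutive permutations (each pair of elements is swapped exactly once in it). A transposition swapping the elements in positions $i,i+1$ is an $i$-transposition; for $1\le k\le n/2$ it is $k$-critical if it is a $k$-transposition or an $(n-k)$-transposition (for $n=30$, the $15$-critical transpositions are the $15$-transpositions). An $n$-half-period $\Pi$ ($3\mid n$) is $3$-decomposable if its elements can be labeled $A=\{a_1,\dots,a_{n/3}\}$, $B=\{b_1,\dots,b_{n/3}\}$, $C=\{c_1,\dots,c_{n/3}\}$ so that its first permutation is $(a_{n/3},\dots,a_1,b_1,\dots,b_{n/3},c_1,\dots,c_{n/3})$, every transposition between an element of $A$ and an element of $B$ occurs before every transposition between an element of $C$ and an element of $A\cup B$, and every transposition between $A$ and $C$ occurs before every transposition between $B$ and $C$. A transposition is bichromatic if its two elements lie in different classes among $A,B,C$. $N_k^{bi}(\Pi)$ is the number of bichromatic $k$-critical transpositions of $\Pi$. *)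

theory Defs
  imports Main
begin

(* ys arises from xs by an i-transposition: swapping the elements in the
   (1-based) positions i and i+1. *)
definition adj_swap :: "nat \<Rightarrow> 'a list \<Rightarrow> 'a list \<Rightarrow> bool" where
  "adj_swap i xs ys \<longleftrightarrow> 1 \<le> i \<and> i < length xs \<and>
     ys = xs[i - 1 := xs ! i, i := xs ! (i - 1)]"

definition allowable_seq :: "nat \<Rightarrow> (int \<Rightarrow> 'a list) \<Rightarrow> bool" where
  "allowable_seq n S \<longleftrightarrow>
     (\<forall>j. distinct (S j) \<and> length (S j) = n \<and> set (S j) = set (S 0)) \<and>
     (\<forall>j. \<exists>i. adj_swap i (S j) (S (j + 1))) \<and>
     (\<forall>j. S (j + int (n choose 2)) = rev (S j))"

definition half_period :: "nat \<Rightarrow> 'a list list \<Rightarrow> bool" where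
  "half_period n P \<longleftrightarrow>
     (\<exists>S j. allowable_seq n S \<and> P = map (\<lambda>k. S (j + int k)) [0..<(n choose 2) + 1])"

definition is_itransp :: "'a list list \<Rightarrow> nat \<Rightarrow> nat \<Rightarrow> bool" where
  "is_itransp P t i \<longleftrightarrow> adj_swap i (P ! t) (P ! Suc t)"

definition critical :: "nat \<Rightarrow> nat \<Rightarrow> 'a list list \<Rightarrow> nat \<Rightarrow> bool" where
  "critical n k P t \<longleftrightarrow> is_itransp P t k \<or> is_itransp P t (n - k)"

definition swapped :: "'a list list \<Rightarrow> nat \<Rightarrow> 'a set" where
  "swapped P t = {x. \<exists>p < length (P ! t). P ! t ! p = x \<and> P ! Suc t ! p \<noteq> x}"

definition between :: "'a set \<Rightarrow> 'a set \<Rightarrow> 'a set \<Rightarrow> bool" where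
  "between X Y pr \<longleftrightarrow> (\<exists>x y. pr = {x, y} \<and> x \<in> X \<and> y \<in> Y)"

definition bichromatic :: "'a set \<Rightarrow> 'a set \<Rightarrow> 'a set \<Rightarrow> 'a set \<Rightarrow> bool" where
  "bichromatic A B C pr \<longleftrightarrow> between A B pr \<or> between A C pr \<or> between B C pr"

definition three_decomposable_with ::
  "nat \<Rightarrow> 'a list list \<Rightarrow> 'a set \<Rightarrow> 'a set \<Rightarrow> 'a set \<Rightarrow> bool" where
  "three_decomposable_with n P A B C \<longleftrightarrow> 3 dvd n \<and>
     (\<exists>a b c :: nat \<Rightarrow> 'a.
        A = a ` {1..n div 3} \<and> B = b ` {1..n div 3} \<and> C = c ` {1..n div 3} \<and>
        P ! 0 = map a (rev [1..<n div 3 + 1]) @ map b [1..<n div 3 + 1] @ map c [1..<n div 3 + 1] \<and>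
        (\<forall>t t'. t < n choose 2 \<and> t' < n choose 2 \<and>
            between A B (swapped P t) \<and> between C (A \<union> B) (swapped P t') \<longrightarrow> t < t') \<and>
        (\<forall>t t'. t < n choose 2 \<and> t' < n choose 2 \<and>
            between A C (swapped P t) \<and> between B C (swapped P t') \<longrightarrow> t < t'))"

definition N_bi :: "nat \<Rightarrow> nat \<Rightarrow> 'a list list \<Rightarrow> 'a set \<Rightarrow> 'a set \<Rightarrow> 'a set \<Rightarrow> nat" where
  "N_bi n k P A B C =
     card {t. t < n choose 2 \<and> critical n k P t \<and> bichromatic A B C (swapped P t)}"

end

theory Submission
  imports Defs
begin

text \<open>Relabel every element by its position in the first permutation. A half-period becomes a
  sequence of n choose 2 adjacent swaps taking [0..<n] to its reverse; since each swap changes the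
  number of inversions by one, every swap creates an inversion and every pair is swapped exactly
  once. Fix the cut after the first c positions, m \<le> c \<le> 2m with m = n/3. The number of
  elements of a class to the left of the cut changes exactly at the c-transpositions moving one of
  its elements across the cut, so m c-transpositions move an element of A out and m move an element
  of C in. All A-B swaps precede the first swap involving C; until then A \<union> B fills the first
  2m positions, and afterwards B fills the first m. Hence 2m - c of the c-transpositions are A-B
  swaps, c - m are A-C swaps, and 2m - (c - m) = n - c are bichromatic: 15 for n = 30, c = 15.\<close>

lemma adj_swapD:
  assumes "adj_swap (Suc i) xs ys"
  shows "Suc i < length xs" and "ys = xs[i := xs ! Suc i, Suc i := xs ! i]"
  using assms by (simp_all add: adj_swap_def)

lemma adj_swap_map: "adj_swap i xs ys \<Longrightarrow> adj_swap i (map f xs) (map f ys)"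
  by (auto simp: adj_swap_def map_update)

lemma swapped_set_adj_swap:
  assumes "distinct xs" and "adj_swap i xs ys"
  shows "{x. \<exists>p < length xs. xs ! p = x \<and> ys ! p \<noteq> x} = {xs ! (i - 1), xs ! i}"
proof -
  from assms(2) have i: "1 \<le> i" "i < length xs"
    and ys: "ys = xs[i - 1 := xs ! i, i := xs ! (i - 1)]"
    by (simp_all add: adj_swap_def)
  have ne: "xs ! (i - 1) \<noteq> xs ! i"
    using i nth_eq_iff_index_eq[OF assms(1), of "i - 1" i] by simp
  have ys_i: "ys ! (i - 1) = xs ! i" "ys ! i = xs ! (i - 1)"
    using i by (simp_all add: ys nth_list_update)
  have ys_other: "ys ! p = xs ! p" if "p \<noteq> i - 1" "p \<noteq> i" for p
    using that by (simp add: ys)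
  show ?thesis
  proof (intro equalityI subsetI)
    fix x assume "x \<in> {x. \<exists>p < length xs. xs ! p = x \<and> ys ! p \<noteq> x}"
    then obtain p where "xs ! p = x" "ys ! p \<noteq> x" by blast
    then have "p = i - 1 \<or> p = i" using ys_other by metis
    then show "x \<in> {xs ! (i - 1), xs ! i}" using \<open>xs ! p = x\<close> by blast
  next
    fix x assume "x \<in> {xs ! (i - 1), xs ! i}"
    then show "x \<in> {x. \<exists>p < length xs. xs ! p = x \<and> ys ! p \<noteq> x}"
      using i ne ys_i by (fastforce intro: exI[of _ "i - 1"] exI[of _ i])
  qed
qed

lemma adj_swap_unique:
  assumes "distinct xs" and "adj_swap i xs ys" and "adj_swap j xs ys"
  shows "i = j"
proof -
  have "{xs ! (i - 1), xs ! i} = {xs ! (j - 1), xs ! j}"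
    using swapped_set_adj_swap[OF assms(1,2)] swapped_set_adj_swap[OF assms(1,3)] by simp
  moreover have "1 \<le> i" "i < length xs" "1 \<le> j" "j < length xs"
    using assms(2,3) by (simp_all add: adj_swap_def)
  ultimately show ?thesis
    using nth_eq_iff_index_eq[OF assms(1)] by (auto simp: doubleton_eq_iff)
qed

lemma card_less_Suc_filter:
  "card {s. s < Suc t \<and> P s} = card {s. s < t \<and> P s} + (if P t then 1 else 0)"
proof -
  have "{s. s < Suc t \<and> P s} = (if P t then insert t {s. s < t \<and> P s} else {s. s < t \<and> P s})"
    by (auto simp: less_Suc_eq)
  then show ?thesis by simp
qed

lemma telescope_card_filter:
  fixes f :: "nat \<Rightarrow> nat"
  assumes "\<And>t. t < T \<Longrightarrow> f (Suc t) + (if P t then 1 else 0) = f t + (if Q t then 1 else 0)"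
  shows "f T + card {s. s < T \<and> P s} = f 0 + card {s. s < T \<and> Q s}"
  using assms
proof (induction T)
  case (Suc T)
  then have "f T + card {s. s < T \<and> P s} = f 0 + card {s. s < T \<and> Q s}"
    and "f (Suc T) + (if P T then 1 else 0) = f T + (if Q T then 1 else 0)"
    by simp_all
  then show ?case by (simp add: card_less_Suc_filter)
qed simp

lemma card_ordered_pairs: "card {(u, v). u < v \<and> v < n} = n choose 2"
proof (induction n)
  case (Suc n)
  have fin: "finite {(u, v). u < v \<and> v < n}"
    by (rule finite_subset[of _ "{..<n} \<times> {..<n}"]) auto
  have "{(u, v). u < v \<and> v < Suc n} = {(u, v). u < v \<and> v < n} \<union> (\<lambda>u. (u, n)) ` {..<n}"
    by auto
  also have "card \<dots> = card {(u, v). u < v \<and> v < n} + n"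
    using fin by (subst card_Un_disjoint) (auto simp: card_image inj_on_def)
  finally show ?case
    using Suc by (simp add: choose_two) (cases n; simp add: algebra_simps)
qed simp

lemma card_Diff_singleton_add:
  "finite S \<Longrightarrow> card S = card (S - {x}) + (if x \<in> S then 1 else 0)"
  using card_Suc_Diff1[of S x] by auto

lemma ex_step_into: "\<not> P 0 \<Longrightarrow> P n \<Longrightarrow> \<exists>s < n. \<not> P s \<and> P (Suc s)"
  by (induction n) (auto simp: less_Suc_eq)

lemma image_nth_interval:
  assumes "i + l \<le> length xs"
  shows "(!) xs ` {i..<i + l} = set (take l (drop i xs))"
proof -
  have "(!) xs ` {i..<i + l} = (!) xs ` (plus i ` {0..<l})"
    by (simp add: add.commute)
  also have "\<dots> = (!) (drop i xs) ` {0..<l}"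
    unfolding image_image using assms by (intro image_cong) auto
  also have "\<dots> = set (take l (drop i xs))"
    using assms by (intro nth_image) simp
  finally show ?thesis .
qed

lemma image_nth_three_blocks:
  assumes "xs = map a (rev [1..<m + 1]) @ map b [1..<m + 1] @ map c [1..<m + 1]"
  shows "(!) xs ` {..<m} = a ` {1..m}"
    and "(!) xs ` {m..<2 * m} = b ` {1..m}"
    and "(!) xs ` {2 * m..<3 * m} = c ` {1..m}"
proof -
  have len: "length xs = 3 * m"
    using assms by simp
  have "(!) xs ` {0..<0 + m} = set (take m (drop 0 xs))"
    using len by (intro image_nth_interval) simp
  then show "(!) xs ` {..<m} = a ` {1..m}"
    using assms by (simp add: lessThan_atLeast0 atLeastLessThanSuc_atLeastAtMost del: upt_Suc)
  have "(!) xs ` {m..<m + m} = set (take m (drop m xs))"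
    using len by (intro image_nth_interval) simp
  then show "(!) xs ` {m..<2 * m} = b ` {1..m}"
    using assms by (simp add: mult_2 atLeastLessThanSuc_atLeastAtMost del: upt_Suc)
  have "(!) xs ` {2 * m..<2 * m + m} = set (take m (drop (2 * m) xs))"
    using len by (intro image_nth_interval) simp
  then show "(!) xs ` {2 * m..<3 * m} = c ` {1..m}"
    using assms by (simp add: atLeastLessThanSuc_atLeastAtMost del: upt_Suc)
qed

lemma between_pair: "between X Y {u, v} \<longleftrightarrow> u \<in> X \<and> v \<in> Y \<or> v \<in> X \<and> u \<in> Y"
  by (auto simp: between_def doubleton_eq_iff)

lemma bichromatic_intervals_iff:
  fixes u v m n :: nat
  assumes "u < v" "v < n"
  shows "bichromatic {..<m} {m..<2 * m} {2 * m..<n} {u, v} \<longleftrightarrow>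
    (u < m \<and> m \<le> v) \<or> (u < 2 * m \<and> 2 * m \<le> v)"
  using assms by (auto simp: bichromatic_def between_pair)

lemma between_image:
  assumes "inj_on f W" "X \<subseteq> W" "Y \<subseteq> W" "u \<in> W" "v \<in> W"
  shows "between (f ` X) (f ` Y) {f u, f v} \<longleftrightarrow> between X Y {u, v}"
  using assms by (simp add: between_pair inj_on_image_mem_iff)

lemma bichromatic_image:
  assumes "inj_on f W" "X \<subseteq> W" "Y \<subseteq> W" "Z \<subseteq> W" "u \<in> W" "v \<in> W"
  shows "bichromatic (f ` X) (f ` Y) (f ` Z) {f u, f v} \<longleftrightarrow> bichromatic X Y Z {u, v}"
  using assms by (simp add: bichromatic_def between_image)

text \<open>Step t swaps the 0-based positions k t and Suc (k t); in the 1-based convention of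
  the definitions it is a (Suc (k t))-transposition.\<close>

locale adjacent_sweep =
  fixes n :: nat and R :: "nat \<Rightarrow> nat list" and k :: "nat \<Rightarrow> nat"
  assumes distinct_R: "distinct (R t)"
    and set_R: "set (R t) = {..<n}"
    and adj_swap_R: "adj_swap (Suc (k t)) (R t) (R (Suc t))"
    and R_0: "R 0 = [0..<n]"
    and R_end: "R (n choose 2) = rev [0..<n]"
begin

definition pos :: "nat \<Rightarrow> nat \<Rightarrow> nat" where
  "pos t = the_inv_into {..<n} ((!) (R t))"

definition swap_lo :: "nat \<Rightarrow> nat" where
  "swap_lo t = R t ! k t"

definition swap_hi :: "nat \<Rightarrow> nat" where
  "swap_hi t = R t ! Suc (k t)"

lemma length_R: "length (R t) = n"
  using distinct_card[OF distinct_R] set_R by simp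

lemma Suc_k_less: "Suc (k t) < n"
  using adj_swapD(1)[OF adj_swap_R] length_R by simp

lemma R_Suc: "R (Suc t) = (R t)[k t := swap_hi t, Suc (k t) := swap_lo t]"
  using adj_swapD(2)[OF adj_swap_R] by (simp add: swap_lo_def swap_hi_def)

lemma bij_nth_R: "bij_betw ((!) (R t)) {..<n} {..<n}"
  using bij_betw_nth[OF distinct_R] length_R set_R by simp

lemma nth_R_less: "p < n \<Longrightarrow> R t ! p < n"
  using bij_betw_apply[OF bij_nth_R] by simp

lemma pos_less: "v < n \<Longrightarrow> pos t v < n"
  unfolding pos_def using bij_betw_the_inv_into[OF bij_nth_R] bij_betw_apply by fastforce

lemma nth_pos: "v < n \<Longrightarrow> R t ! pos t v = v"
  unfolding pos_def using bij_nth_R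
  by (metis bij_betw_def f_the_inv_into_f lessThan_iff)

lemma pos_nth: "p < n \<Longrightarrow> pos t (R t ! p) = p"
  unfolding pos_def using bij_nth_R
  by (metis bij_betw_def the_inv_into_f_f lessThan_iff)

lemma pos_inj: "u < n \<Longrightarrow> v < n \<Longrightarrow> pos t u = pos t v \<Longrightarrow> u = v"
  using nth_pos by metis

lemma swap_lo_less: "swap_lo t < n" and swap_hi_less: "swap_hi t < n"
  using nth_R_less Suc_k_less Suc_lessD unfolding swap_lo_def swap_hi_def by blast+

lemma pos_swap_lo: "pos t (swap_lo t) = k t" and pos_swap_hi: "pos t (swap_hi t) = Suc (k t)"
  using pos_nth Suc_k_less Suc_lessD unfolding swap_lo_def swap_hi_def by blast+

lemma swap_lo_neq_hi: "swap_lo t \<noteq> swap_hi t"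
  using pos_swap_lo pos_swap_hi by (metis n_not_Suc_n)

lemma pos_Suc:
  "v < n \<Longrightarrow> pos (Suc t) v =
     (if v = swap_lo t then Suc (k t) else if v = swap_hi t then k t else pos t v)"
proof -
  assume v: "v < n"
  have k: "k t < n" "Suc (k t) < n" "length (R t) = n"
    using Suc_k_less length_R Suc_lessD by blast+
  consider "v = swap_lo t" | "v = swap_hi t" | "v \<noteq> swap_lo t" "v \<noteq> swap_hi t"
    by blast
  then show ?thesis
  proof cases
    case 1
    then have "R (Suc t) ! Suc (k t) = v" using k by (simp add: R_Suc)
    then show ?thesis using pos_nth[of "Suc (k t)" "Suc t"] k 1 by simp
  next
    case 2
    then have "R (Suc t) ! k t = v" using k by (simp add: R_Suc)
    then show ?thesis using pos_nth[of "k t" "Suc t"] k 2 swap_lo_neq_hi by metis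
  next
    case 3
    then have "pos t v \<noteq> k t" "pos t v \<noteq> Suc (k t)"
      using nth_pos[OF v] by (metis swap_lo_def, metis swap_hi_def)
    then have "R (Suc t) ! pos t v = v" using nth_pos[OF v] by (simp add: R_Suc)
    then show ?thesis using pos_nth[of "pos t v" "Suc t"] pos_less[OF v] 3 by simp
  qed
qed

lemma pos_0: "v < n \<Longrightarrow> pos 0 v = v"
  using pos_nth[of v 0] by (simp add: R_0)

lemma pos_end: "v < n \<Longrightarrow> pos (n choose 2) v = n - Suc v"
  using pos_nth[of "n - Suc v" "n choose 2"] by (simp add: R_end rev_nth)

lemma pos_Suc_less_iff:
  assumes "u < n" "v < n" "{u, v} \<noteq> {swap_lo t, swap_hi t}"
  shows "pos (Suc t) u < pos (Suc t) v \<longleftrightarrow> pos t u < pos t v"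
proof -
  have off: "pos t w \<noteq> k t \<and> pos t w \<noteq> Suc (k t)"
    if "w < n" "w \<noteq> swap_lo t" "w \<noteq> swap_hi t" for w
    using that pos_inj pos_swap_lo pos_swap_hi swap_lo_less swap_hi_less by metis
  have moved: "pos t w \<in> {k t, Suc (k t)} \<and> pos (Suc t) w \<in> {k t, Suc (k t)}"
    if "w \<in> {swap_lo t, swap_hi t}" for w
    using that pos_Suc[OF swap_lo_less, of t] pos_Suc[OF swap_hi_less, of t] swap_lo_neq_hi[of t]
      pos_swap_lo[of t] pos_swap_hi[of t] by auto
  have fixed: "pos (Suc t) w = pos t w \<and> pos t w \<notin> {k t, Suc (k t)}"
    if "w < n" "w \<notin> {swap_lo t, swap_hi t}" for w
    using that off[of w] pos_Suc[of w t] by auto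
  consider "u \<notin> {swap_lo t, swap_hi t}" "v \<notin> {swap_lo t, swap_hi t}"
    | "u \<in> {swap_lo t, swap_hi t}" "v \<notin> {swap_lo t, swap_hi t}"
    | "u \<notin> {swap_lo t, swap_hi t}" "v \<in> {swap_lo t, swap_hi t}"
    | "u = v"
    using assms(3) by blast
  then show ?thesis
  proof cases
    case 2
    then show ?thesis using moved[of u] fixed[of v] assms(2) by auto
  next
    case 3
    then show ?thesis using moved[of v] fixed[of u] assms(1) by auto
  qed (use fixed assms in auto)
qed

definition inversions :: "nat \<Rightarrow> (nat \<times> nat) set" where
  "inversions t = {(u, v). u < v \<and> v < n \<and> pos t v < pos t u}"

lemma finite_inversions: "finite (inversions t)"
  by (rule finite_subset[of _ "{..<n} \<times> {..<n}"]) (auto simp: inversions_def)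

lemma inversions_0: "inversions 0 = {}"
  by (auto simp: inversions_def pos_0)

lemma card_inversions_end: "card (inversions (n choose 2)) = n choose 2"
proof -
  have "inversions (n choose 2) = {(u, v). u < v \<and> v < n}"
    by (auto simp: inversions_def pos_end)
  then show ?thesis by (simp add: card_ordered_pairs)
qed

lemma inversions_Suc:
  "inversions (Suc t) = (if swap_lo t < swap_hi t
     then insert (swap_lo t, swap_hi t) (inversions t)
     else inversions t - {(swap_hi t, swap_lo t)})"
proof -
  have "(u, v) \<in> inversions (Suc t) \<longleftrightarrow>
      (u, v) \<in> (if swap_lo t < swap_hi t then insert (swap_lo t, swap_hi t) (inversions t)
                else inversions t - {(swap_hi t, swap_lo t)})" for u v
  proof (cases "{u, v} = {swap_lo t, swap_hi t}")
    case True
    then show ?thesis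
      using swap_lo_less swap_hi_less pos_Suc[of "swap_lo t" t] pos_Suc[of "swap_hi t" t]
        pos_swap_lo[of t] pos_swap_hi[of t] swap_lo_neq_hi[of t]
      by (auto simp: inversions_def doubleton_eq_iff)
  next
    case False
    then show ?thesis
      using pos_Suc_less_iff[of v u t] by (auto simp: inversions_def doubleton_eq_iff)
  qed
  then show ?thesis by auto
qed

lemma card_inversions_Suc_le: "card (inversions (Suc t)) \<le> Suc (card (inversions t))"
  using finite_inversions[of t]
  by (auto simp: inversions_Suc card_insert_if card_Diff_singleton_if)

lemma card_inversions_add_le: "card (inversions (t + d)) \<le> card (inversions t) + d"
  by (induction d) (use card_inversions_Suc_le le_trans in fastforce)+

text \<open>The number of inversions grows by at most one per step and must reach n choose 2 after
  n choose 2 steps, so no step may undo an inversion.\<close>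

lemma swap_lo_less_hi:
  assumes "t < n choose 2"
  shows "swap_lo t < swap_hi t"
proof (rule ccontr)
  have "Suc t + ((n choose 2) - Suc t) = n choose 2"
    using assms by linarith
  then have to_end: "card (inversions (n choose 2)) \<le> card (inversions (Suc t)) + ((n choose 2) - Suc t)"
    using card_inversions_add_le[of "Suc t" "(n choose 2) - Suc t"] by (simp only:)
  assume "\<not> swap_lo t < swap_hi t"
  then have "swap_hi t < swap_lo t" using swap_lo_neq_hi[of t] by linarith
  then have "(swap_hi t, swap_lo t) \<in> inversions t"
    using pos_swap_lo pos_swap_hi swap_lo_less by (auto simp: inversions_def)
  moreover have "inversions (Suc t) = inversions t - {(swap_hi t, swap_lo t)}"
    using \<open>swap_hi t < swap_lo t\<close> by (simp add: inversions_Suc)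
  ultimately have "Suc (card (inversions (Suc t))) = card (inversions t)"
    using finite_inversions[of t] card_Suc_Diff1 by metis
  moreover have "card (inversions t) \<le> t"
    using card_inversions_add_le[of 0 t] by (simp add: inversions_0)
  ultimately show False
    using to_end card_inversions_end assms by linarith
qed

lemma inversions_mono:
  assumes "t \<le> t'" "t' \<le> n choose 2"
  shows "inversions t \<subseteq> inversions t'"
  using assms
proof (induction t' rule: dec_induct)
  case (step s)
  then show ?case
    using swap_lo_less_hi[of s] by (auto simp: inversions_Suc)
qed simp

lemma ex_swap_of_pair:
  assumes "u < v" "v < n"
  obtains s where "s < n choose 2" "swap_lo s = u" "swap_hi s = v"
proof -
  have "\<exists>s < n choose 2. (u, v) \<notin> inversions s \<and> (u, v) \<in> inversions (Suc s)"
  proof (rule ex_step_into)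
    show "(u, v) \<notin> inversions 0" by (simp add: inversions_0)
    show "(u, v) \<in> inversions (n choose 2)"
      using assms by (simp add: inversions_def pos_end)
  qed
  then obtain s where "s < n choose 2" "(u, v) \<notin> inversions s" "(u, v) \<in> inversions (Suc s)"
    by blast
  with swap_lo_less_hi[of s] show thesis
    using that by (auto simp: inversions_Suc)
qed

text \<open>At a step with Suc (k s) = c, swap_lo s leaves the first c positions and swap_hi s
  enters them.\<close>

definition crosses :: "nat \<Rightarrow> nat set \<Rightarrow> nat set \<Rightarrow> nat \<Rightarrow> bool" where
  "crosses c U W s \<longleftrightarrow> Suc (k s) = c \<and> swap_lo s \<in> U \<and> swap_hi s \<in> W"

definition left_count :: "nat \<Rightarrow> nat set \<Rightarrow> nat \<Rightarrow> nat" where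
  "left_count c V t = card {v \<in> V. pos t v < c}"

lemma left_count_Suc_off_cut:
  assumes "V \<subseteq> {..<n}" "Suc (k t) \<noteq> c"
  shows "left_count c V (Suc t) = left_count c V t"
proof -
  have "pos (Suc t) v < c \<longleftrightarrow> pos t v < c" if "v < n" for v
    using pos_Suc[OF that, of t] pos_swap_lo[of t] pos_swap_hi[of t] assms(2) by auto
  then have "{v \<in> V. pos (Suc t) v < c} = {v \<in> V. pos t v < c}"
    using assms(1) by auto
  then show ?thesis by (simp add: left_count_def)
qed

lemma left_count_Suc_at_cut:
  assumes "V \<subseteq> {..<n}" "Suc (k t) = c"
  shows "left_count c V (Suc t) + (if swap_lo t \<in> V then 1 else 0)
       = left_count c V t + (if swap_hi t \<in> V then 1 else 0)"
proof -
  let ?S = "\<lambda>t. {v \<in> V. pos t v < c}"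
  have fin: "finite (?S t)" for t
    by (rule finite_subset[of _ "{..<n}"]) (use assms in auto)
  have "v \<in> ?S (Suc t) - {swap_hi t} \<longleftrightarrow> v \<in> ?S t - {swap_lo t}" for v
  proof (cases "v = swap_lo t \<or> v = swap_hi t")
    case True
    then show ?thesis
      using assms(2) pos_Suc[OF swap_lo_less, of t] pos_swap_hi[of t] by auto
  next
    case False
    then show ?thesis
      using assms(1) pos_Suc[of v t] by auto
  qed
  then have same: "?S (Suc t) - {swap_hi t} = ?S t - {swap_lo t}"
    by blast
  have "swap_hi t \<in> ?S (Suc t) \<longleftrightarrow> swap_hi t \<in> V" "swap_lo t \<in> ?S t \<longleftrightarrow> swap_lo t \<in> V"
    using assms(2) pos_Suc[OF swap_hi_less, of t] not_sym[OF swap_lo_neq_hi[of t]] pos_swap_lo[of t]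
    by auto
  then show ?thesis
    using card_Diff_singleton_add[OF fin, of "Suc t" "swap_hi t"]
      card_Diff_singleton_add[OF fin, of t "swap_lo t"]
    unfolding left_count_def same by simp
qed

lemma left_count_Suc:
  assumes "V \<subseteq> {..<n}"
  shows "left_count c V (Suc t) + (if crosses c V (- V) t then 1 else 0)
       = left_count c V t + (if crosses c (- V) V t then 1 else 0)"
  using left_count_Suc_off_cut[OF assms] left_count_Suc_at_cut[OF assms, of t c]
  by (cases "Suc (k t) = c") (auto simp: crosses_def)

lemma left_count_balance:
  assumes "V \<subseteq> {..<n}"
  shows "left_count c V T + card {s. s < T \<and> crosses c V (- V) s}
       = left_count c V 0 + card {s. s < T \<and> crosses c (- V) V s}"
  using telescope_card_filter left_count_Suc[OF assms] by blast

end


text \<open>Elements are labelled by their initial positions, so the classes A, B, C are the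
  intervals below.\<close>

locale three_class_sweep = adjacent_sweep +
  fixes m :: nat
  assumes n_eq: "3 * m = n"
    and AB_before_C: "\<lbrakk>t < n choose 2; t' < n choose 2;
      between {..<m} {m..<2 * m} {swap_lo t, swap_hi t};
      between {2 * m..<n} {..<2 * m} {swap_lo t', swap_hi t'}\<rbrakk> \<Longrightarrow> t < t'"
begin

lemma less_2m_imp_less_n: "v < 2 * m \<Longrightarrow> v < n"
  using n_eq by linarith

definition first_C_swap :: nat where
  "first_C_swap = (LEAST t. t = n choose 2 \<or> swap_lo t < 2 * m \<and> 2 * m \<le> swap_hi t)"

lemma first_C_swap_le: "first_C_swap \<le> n choose 2"
  unfolding first_C_swap_def by (rule Least_le) simp

lemma first_C_swap_is_C_swap:
  assumes "first_C_swap < n choose 2"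
  shows "swap_lo first_C_swap < 2 * m" "2 * m \<le> swap_hi first_C_swap"
proof -
  have "first_C_swap = n choose 2 \<or>
      swap_lo first_C_swap < 2 * m \<and> 2 * m \<le> swap_hi first_C_swap"
    unfolding first_C_swap_def by (rule LeastI[of _ "n choose 2"]) simp
  with assms show "swap_lo first_C_swap < 2 * m" "2 * m \<le> swap_hi first_C_swap"
    by simp_all
qed

lemma no_C_swap_before:
  assumes "t < first_C_swap" "swap_lo t < 2 * m"
  shows "swap_hi t < 2 * m"
  using not_less_Least[OF assms(1)[unfolded first_C_swap_def]] assms first_C_swap_le by auto

lemma pos_AB_before_first_C_swap:
  "t \<le> first_C_swap \<Longrightarrow> v < 2 * m \<Longrightarrow> pos t v < 2 * m"
proof (induction t arbitrary: v)
  case 0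
  then have "v < n" using n_eq by linarith
  with 0 show ?case by (simp add: pos_0)
next
  case (Suc t)
  have v: "v < n" using Suc.prems n_eq by linarith
  show ?case
  proof (cases "v = swap_lo t")
    case True
    then have "swap_hi t < 2 * m"
      using no_C_swap_before Suc.prems by simp
    then have "pos t (swap_hi t) < 2 * m"
      using Suc by simp
    then show ?thesis
      using True pos_Suc[OF v] pos_swap_hi by simp
  next
    case False
    then have "pos (Suc t) v \<le> pos t v"
      using pos_Suc[OF v] pos_swap_hi[of t] by auto
    moreover have "pos t v < 2 * m"
      using Suc by simp
    ultimately show ?thesis by simp
  qed
qed

lemma AB_swap_before_first_C_swap:
  assumes "t < n choose 2" "swap_lo t < m" "m \<le> swap_hi t" "swap_hi t < 2 * m"
  shows "t < first_C_swap"
proof (cases "first_C_swap < n choose 2")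
  case True
  then show ?thesis
    using AB_before_C[OF assms(1) True] assms first_C_swap_is_C_swap swap_hi_less
    by (auto simp: between_pair)
qed (use assms first_C_swap_le in simp)

lemma B_before_A_at_first_C_swap:
  assumes "u < m" "m \<le> v" "v < 2 * m"
  shows "pos first_C_swap v < pos first_C_swap u"
proof -
  have "v < n" using assms n_eq by linarith
  then obtain s where s: "s < n choose 2" "swap_lo s = u" "swap_hi s = v"
    using ex_swap_of_pair assms by (metis order_less_le_trans)
  then have "s < first_C_swap"
    using AB_swap_before_first_C_swap assms by simp
  moreover have "(u, v) \<in> inversions (Suc s)"
    using s swap_lo_less_hi[OF s(1)] by (simp add: inversions_Suc)
  ultimately have "(u, v) \<in> inversions first_C_swap"
    using inversions_mono[of "Suc s" first_C_swap] first_C_swap_le by auto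
  then show ?thesis by (simp add: inversions_def)
qed

text \<open>At the first swap between A \<union> B and C, the classes A and B fill the first 2m positions
  and every element of B precedes every element of A; hence B occupies the first m positions.\<close>

lemma pos_B_at_first_C_swap:
  assumes "m \<le> v" "v < 2 * m"
  shows "pos first_C_swap v < m"
proof (rule ccontr)
  assume "\<not> pos first_C_swap v < m"
  have "pos first_C_swap ` {..<m} \<subseteq> {pos first_C_swap v<..<2 * m}"
    using B_before_A_at_first_C_swap[OF _ assms] pos_AB_before_first_C_swap[OF order_refl]
    by fastforce
  moreover have "inj_on (pos first_C_swap) {..<m}"
    using pos_inj n_eq by (intro inj_onI) simp
  ultimately have "card {..<m} \<le> card {pos first_C_swap v<..<2 * m}"
    by (metis card_image card_mono finite_greaterThanLessThan)
  then show False
    using \<open>\<not> pos first_C_swap v < m\<close> assms by simp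
qed

lemma card_crosses_out_of_A:
  assumes "m \<le> c" "c \<le> 2 * m"
  shows "card {s. s < n choose 2 \<and> crosses c {..<m} (- {..<m}) s} = m"
proof -
  have "left_count c {..<m} (n choose 2) + card {s. s < n choose 2 \<and> crosses c {..<m} (- {..<m}) s}
      = left_count c {..<m} 0 + card {s. s < n choose 2 \<and> crosses c (- {..<m}) {..<m} s}"
    using n_eq by (intro left_count_balance) auto
  moreover have "{s. s < n choose 2 \<and> crosses c (- {..<m}) {..<m} s} = {}"
    by (auto simp: crosses_def dest: swap_lo_less_hi)
  moreover have "left_count c {..<m} 0 = m"
  proof -
    have "{v \<in> {..<m}. pos 0 v < c} = {..<m}"
      using assms by (auto simp: pos_0 less_2m_imp_less_n)
    then show ?thesis by (simp add: left_count_def)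
  qed
  moreover have "left_count c {..<m} (n choose 2) = 0"
  proof -
    have "\<not> pos (n choose 2) v < c" if "v < m" for v
      using that pos_end[of v] assms n_eq by auto
    then have "{v \<in> {..<m}. pos (n choose 2) v < c} = {}"
      by auto
    then show ?thesis by (simp add: left_count_def)
  qed
  ultimately show ?thesis by simp
qed

lemma card_crosses_into_C:
  assumes "m \<le> c" "c \<le> 2 * m"
  shows "card {s. s < n choose 2 \<and> crosses c (- {2 * m..<n}) {2 * m..<n} s} = m"
proof -
  have "left_count c {2 * m..<n} (n choose 2)
        + card {s. s < n choose 2 \<and> crosses c {2 * m..<n} (- {2 * m..<n}) s}
      = left_count c {2 * m..<n} 0 + card {s. s < n choose 2 \<and> crosses c (- {2 * m..<n}) {2 * m..<n} s}"
    by (intro left_count_balance) auto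
  moreover have "{s. s < n choose 2 \<and> crosses c {2 * m..<n} (- {2 * m..<n}) s} = {}"
    using swap_hi_less by (fastforce simp: crosses_def dest: swap_lo_less_hi)
  moreover have "left_count c {2 * m..<n} 0 = 0"
  proof -
    have "{v \<in> {2 * m..<n}. pos 0 v < c} = {}"
      using assms by (auto simp: pos_0)
    then show ?thesis by (simp add: left_count_def)
  qed
  moreover have "left_count c {2 * m..<n} (n choose 2) = m"
  proof -
    have "pos (n choose 2) v < c" if "v \<in> {2 * m..<n}" for v
      using that pos_end[of v] assms n_eq by auto
    then have "{v \<in> {2 * m..<n}. pos (n choose 2) v < c} = {2 * m..<n}"
      by auto
    then show ?thesis using n_eq by (simp add: left_count_def)
  qed
  ultimately show ?thesis by simp
qed

lemma card_crosses_into_B_before_first_C_swap: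
  assumes "m \<le> c" "c \<le> 2 * m"
  shows "card {s. s < first_C_swap \<and> crosses c (- {m..<2 * m}) {m..<2 * m} s} = 2 * m - c"
proof -
  have "left_count c {m..<2 * m} first_C_swap
        + card {s. s < first_C_swap \<and> crosses c {m..<2 * m} (- {m..<2 * m}) s}
      = left_count c {m..<2 * m} 0 + card {s. s < first_C_swap \<and> crosses c (- {m..<2 * m}) {m..<2 * m} s}"
    using n_eq by (intro left_count_balance) auto
  moreover have "{s. s < first_C_swap \<and> crosses c {m..<2 * m} (- {m..<2 * m}) s} = {}"
  proof -
    have "\<not> crosses c {m..<2 * m} (- {m..<2 * m}) s" if "s < first_C_swap" for s
    proof
      assume "crosses c {m..<2 * m} (- {m..<2 * m}) s"
      then have "m \<le> swap_lo s" "swap_lo s < 2 * m" "swap_hi s \<notin> {m..<2 * m}"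
        by (auto simp: crosses_def)
      moreover have "swap_lo s < swap_hi s"
        using swap_lo_less_hi that first_C_swap_le by simp
      moreover have "swap_hi s < 2 * m"
        using no_C_swap_before that \<open>swap_lo s < 2 * m\<close> by blast
      ultimately show False by simp
    qed
    then show ?thesis by auto
  qed
  moreover have "left_count c {m..<2 * m} 0 = c - m"
  proof -
    have "{v \<in> {m..<2 * m}. pos 0 v < c} = {m..<c}"
      using assms by (auto simp: pos_0 less_2m_imp_less_n)
    then show ?thesis by (simp add: left_count_def)
  qed
  moreover have "left_count c {m..<2 * m} first_C_swap = m"
  proof -
    have "{v \<in> {m..<2 * m}. pos first_C_swap v < c} = {m..<2 * m}"
      using assms pos_B_at_first_C_swap by fastforce
    then show ?thesis by (simp add: left_count_def)
  qed
  ultimately show ?thesis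
    using assms by simp
qed

lemma crossings_A_B_before_first_C_swap:
  "{s. s < n choose 2 \<and> crosses c {..<m} {m..<2 * m} s}
    = {s. s < first_C_swap \<and> crosses c (- {m..<2 * m}) {m..<2 * m} s}"
proof (intro set_eqI iffI)
  fix s assume "s \<in> {s. s < n choose 2 \<and> crosses c {..<m} {m..<2 * m} s}"
  then show "s \<in> {s. s < first_C_swap \<and> crosses c (- {m..<2 * m}) {m..<2 * m} s}"
    using AB_swap_before_first_C_swap by (auto simp: crosses_def)
next
  fix s assume s: "s \<in> {s. s < first_C_swap \<and> crosses c (- {m..<2 * m}) {m..<2 * m} s}"
  then have "s < n choose 2" using first_C_swap_le by simp
  then show "s \<in> {s. s < n choose 2 \<and> crosses c {..<m} {m..<2 * m} s}"
    using s swap_lo_less_hi[of s] by (auto simp: crosses_def)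
qed

text \<open>The bichromatic swaps at the cut are those moving an element of A out of the first c
  positions together with those moving an element of C into them; the A-C swaps lie in both.\<close>

theorem card_bichromatic_swaps_at_cut:
  assumes "m \<le> c" "c \<le> 2 * m"
  shows "card {s. s < n choose 2 \<and> Suc (k s) = c \<and>
      bichromatic {..<m} {m..<2 * m} {2 * m..<n} {swap_lo s, swap_hi s}} = n - c"
proof -
  let ?A = "{..<m}" and ?B = "{m..<2 * m}" and ?C = "{2 * m..<n}"
  define out_A where "out_A = {s. s < n choose 2 \<and> crosses c ?A (- ?A) s}"
  define into_C where "into_C = {s. s < n choose 2 \<and> crosses c (- ?C) ?C s}"
  define AB where "AB = {s. s < n choose 2 \<and> crosses c ?A ?B s}"
  define AC where "AC = {s. s < n choose 2 \<and> crosses c ?A ?C s}"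
  have fin: "finite out_A" "finite into_C" "finite AB" "finite AC"
    by (simp_all add: out_A_def into_C_def AB_def AC_def)
  have "bichromatic ?A ?B ?C {swap_lo s, swap_hi s} \<longleftrightarrow>
      swap_lo s < m \<and> m \<le> swap_hi s \<or> swap_lo s < 2 * m \<and> 2 * m \<le> swap_hi s"
    if "s < n choose 2" for s
    using bichromatic_intervals_iff[OF swap_lo_less_hi[OF that] swap_hi_less] .
  then have bichromatic_eq:
    "{s. s < n choose 2 \<and> Suc (k s) = c \<and> bichromatic ?A ?B ?C {swap_lo s, swap_hi s}}
      = out_A \<union> into_C"
    using swap_lo_less swap_hi_less by (auto simp: out_A_def into_C_def crosses_def)
  have "out_A \<inter> into_C = AC"
    using swap_hi_less by (auto simp: out_A_def into_C_def AC_def crosses_def)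
  have "out_A = AB \<union> AC" "AB \<inter> AC = {}"
    using swap_hi_less by (auto simp: out_A_def AB_def AC_def crosses_def)
  have "card AB = 2 * m - c"
    unfolding AB_def crossings_A_B_before_first_C_swap
    using card_crosses_into_B_before_first_C_swap assms by simp
  moreover have "card out_A = m" "card into_C = m"
    using card_crosses_out_of_A card_crosses_into_C assms by (simp_all add: out_A_def into_C_def)
  ultimately have "card AC = c - m"
    using card_Un_disjoint[of AB AC] fin \<open>out_A = AB \<union> AC\<close> \<open>AB \<inter> AC = {}\<close> assms by simp
  then show ?thesis
    using card_Un_Int[OF fin(1,2)] \<open>out_A \<inter> into_C = AC\<close> \<open>card out_A = m\<close> \<open>card into_C = m\<close>
      bichromatic_eq assms n_eq by simp
qed

end

lemma half_period_sequence:
  assumes "half_period n P"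
  obtains Q k where "\<And>t. adj_swap (Suc (k t)) (Q t) (Q (Suc t))"
    and "\<And>t. distinct (Q t)" "\<And>t. length (Q t) = n" "\<And>t. set (Q t) = set (Q 0)"
    and "Q (n choose 2) = rev (Q 0)"
    and "\<And>t. t \<le> n choose 2 \<Longrightarrow> P ! t = Q t"
proof -
  obtain S j where S: "allowable_seq n S"
    and P: "P = map (\<lambda>t. S (j + int t)) [0..<(n choose 2) + 1]"
    using assms unfolding half_period_def by blast
  define Q where "Q t = S (j + int t)" for t
  have "\<exists>i. adj_swap i (Q t) (Q (Suc t))" for t
  proof -
    have "j + int (Suc t) = j + int t + 1" by simp
    then show ?thesis
      using S unfolding allowable_seq_def Q_def by metis
  qed
  then have "\<forall>t. \<exists>i. adj_swap (Suc i) (Q t) (Q (Suc t))"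
    by (metis Suc_pred adj_swap_def less_eq_Suc_le Suc_le_eq One_nat_def)
  then obtain k where "\<And>t. adj_swap (Suc (k t)) (Q t) (Q (Suc t))"
    by metis
  moreover have "distinct (Q t)" "length (Q t) = n" "set (Q t) = set (Q 0)" for t
    using S unfolding allowable_seq_def Q_def by (metis add.right_neutral of_nat_0)+
  moreover have "Q (n choose 2) = rev (Q 0)"
    using S unfolding allowable_seq_def Q_def by simp
  moreover have "P ! t = Q t" if "t \<le> n choose 2" for t
    using that by (simp add: P Q_def nth_append del: upt_Suc)
  ultimately show thesis by (rule that)
qed

lemma half_period_relabelled:
  assumes "half_period n P"
  obtains R k where "adjacent_sweep n R k" and "inj_on ((!) (P ! 0)) {..<n}"
    and "\<And>t. t \<le> n choose 2 \<Longrightarrow> P ! t = map ((!) (P ! 0)) (R t)"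
proof -
  obtain Q k where adj: "\<And>t. adj_swap (Suc (k t)) (Q t) (Q (Suc t))"
    and Q: "\<And>t. distinct (Q t)" "\<And>t. length (Q t) = n" "\<And>t. set (Q t) = set (Q 0)"
    and Q_end: "Q (n choose 2) = rev (Q 0)"
    and P_Q: "\<And>t. t \<le> n choose 2 \<Longrightarrow> P ! t = Q t"
    by (rule half_period_sequence[OF assms]) blast
  define f where "f = (!) (P ! 0)"
  define rank where "rank = the_inv_into {..<n} f"
  have bij_f: "bij_betw f {..<n} (set (Q 0))"
    unfolding f_def P_Q[OF le0] using bij_betw_nth[OF Q(1)] Q(2) by simp
  have f_rank: "f (rank x) = x" if "x \<in> set (Q 0)" for x
    unfolding rank_def using that bij_f by (simp add: bij_betw_def f_the_inv_into_f)
  have rank_f: "rank (f p) = p" if "p < n" for p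
    unfolding rank_def using that bij_f by (simp add: bij_betw_def the_inv_into_f_f)
  have bij_rank: "bij_betw rank (set (Q 0)) {..<n}"
    unfolding rank_def by (rule bij_betw_the_inv_into[OF bij_f])
  define R where "R t = map rank (Q t)" for t
  have R_0: "R 0 = [0..<n]"
    using rank_f Q(2) by (intro nth_equalityI) (simp_all add: R_def f_def P_Q)
  have "adjacent_sweep n R k"
  proof
    fix t
    show "distinct (R t)" "set (R t) = {..<n}"
      using Q(1,3)[of t] bij_rank by (simp_all add: R_def distinct_map bij_betw_def)
    show "adj_swap (Suc (k t)) (R t) (R (Suc t))"
      unfolding R_def by (rule adj_swap_map[OF adj])
  next
    show "R 0 = [0..<n]" by (fact R_0)
    show "R (n choose 2) = rev [0..<n]"
      using R_0 by (simp add: R_def Q_end flip: rev_map)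
  qed
  moreover have "inj_on f {..<n}"
    using bij_f by (simp add: bij_betw_def)
  moreover have "P ! t = map f (R t)" if "t \<le> n choose 2" for t
    unfolding R_def map_map P_Q[OF that] using f_rank Q(3)[of t] by (intro map_idI[symmetric]) auto
  ultimately show thesis
    unfolding f_def by (rule that)
qed

lemma (in adjacent_sweep) relabelled_transpositions:
  assumes inj: "inj_on f {..<n}"
    and P_eq: "\<And>t. t \<le> n choose 2 \<Longrightarrow> P ! t = map f (R t)"
    and t: "t < n choose 2"
  shows "swapped P t = {f (swap_lo t), f (swap_hi t)}"
    and "is_itransp P t i \<longleftrightarrow> i = Suc (k t)"
proof -
  have P_t: "P ! t = map f (R t)" and P_Suc: "P ! Suc t = map f (R (Suc t))"
    using P_eq t by simp_all
  have dist: "distinct (P ! t)"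
    using P_t inj distinct_R set_R by (simp add: distinct_map)
  have adj: "adj_swap (Suc (k t)) (P ! t) (P ! Suc t)"
    unfolding P_t P_Suc by (rule adj_swap_map[OF adj_swap_R])
  show "swapped P t = {f (swap_lo t), f (swap_hi t)}"
  proof -
    have "swapped P t = {P ! t ! k t, P ! t ! Suc (k t)}"
      using swapped_set_adj_swap[OF dist adj] by (simp add: swapped_def)
    also have "\<dots> = {f (swap_lo t), f (swap_hi t)}"
      using Suc_k_less[of t] length_R[of t] by (simp add: P_t swap_lo_def swap_hi_def)
    finally show ?thesis .
  qed
  show "is_itransp P t i \<longleftrightarrow> i = Suc (k t)"
    unfolding is_itransp_def using adj_swap_unique[OF dist _ adj] adj by blast
qed

lemma (in adjacent_sweep) relabelled_between:
  assumes "inj_on f {..<n}" "\<And>t. t \<le> n choose 2 \<Longrightarrow> P ! t = map f (R t)"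
    and "t < n choose 2" "X \<subseteq> {..<n}" "Y \<subseteq> {..<n}"
  shows "between (f ` X) (f ` Y) (swapped P t) \<longleftrightarrow> between X Y {swap_lo t, swap_hi t}"
  using between_image[OF assms(1,4,5)] relabelled_transpositions(1)[OF assms(1-3)]
    swap_lo_less swap_hi_less by simp

lemma (in adjacent_sweep) relabelled_bichromatic:
  assumes "inj_on f {..<n}" "\<And>t. t \<le> n choose 2 \<Longrightarrow> P ! t = map f (R t)"
    and "t < n choose 2" "X \<subseteq> {..<n}" "Y \<subseteq> {..<n}" "Z \<subseteq> {..<n}"
  shows "bichromatic (f ` X) (f ` Y) (f ` Z) (swapped P t) \<longleftrightarrow>
    bichromatic X Y Z {swap_lo t, swap_hi t}"
  using bichromatic_image[OF assms(1,4-6)] relabelled_transpositions(1)[OF assms(1-3)]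
    swap_lo_less swap_hi_less by simp

lemma three_decomposable_with_classes:
  assumes "three_decomposable_with n P A B C"
  defines "m \<equiv> n div 3" and "f \<equiv> (!) (P ! 0)"
  shows "3 * m = n" and "A = f ` {..<m}" and "B = f ` {m..<2 * m}" and "C = f ` {2 * m..<n}"
    and "A \<union> B = f ` {..<2 * m}"
    and "\<And>t t'. \<lbrakk>t < n choose 2; t' < n choose 2; between A B (swapped P t);
      between C (A \<union> B) (swapped P t')\<rbrakk> \<Longrightarrow> t < t'"
proof -
  obtain a b c where A: "A = a ` {1..m}" and B: "B = b ` {1..m}" and C: "C = c ` {1..m}"
    and P_0: "P ! 0 = map a (rev [1..<m + 1]) @ map b [1..<m + 1] @ map c [1..<m + 1]"
    and "\<forall>t t'. t < n choose 2 \<and> t' < n choose 2 \<and>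
      between A B (swapped P t) \<and> between C (A \<union> B) (swapped P t') \<longrightarrow> t < t'"
    using assms(1) unfolding three_decomposable_with_def m_def by blast
  then show "\<And>t t'. \<lbrakk>t < n choose 2; t' < n choose 2; between A B (swapped P t);
      between C (A \<union> B) (swapped P t')\<rbrakk> \<Longrightarrow> t < t'"
    by blast
  show n: "3 * m = n"
    using assms(1) by (simp add: three_decomposable_with_def m_def)
  show "A = f ` {..<m}" "B = f ` {m..<2 * m}" "C = f ` {2 * m..<n}"
    using image_nth_three_blocks[OF P_0] n by (simp_all add: A B C f_def)
  then show "A \<union> B = f ` {..<2 * m}"
    by (simp add: ivl_disj_un flip: image_Un)
qed

theorem card_bichromatic_transpositions:
  fixes P :: "'a list list"
  assumes hp: "half_period n P" and dec: "three_decomposable_with n P A B C"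
    and i: "n div 3 \<le> i" "i \<le> 2 * (n div 3)"
  shows "card {t. t < n choose 2 \<and> is_itransp P t i \<and> bichromatic A B C (swapped P t)} = n - i"
proof -
  obtain R k where "adjacent_sweep n R k" and inj: "inj_on ((!) (P ! 0)) {..<n}"
    and P_eq: "\<And>t. t \<le> n choose 2 \<Longrightarrow> P ! t = map ((!) (P ! 0)) (R t)"
    by (rule half_period_relabelled[OF hp]) blast
  interpret adjacent_sweep n R k by fact
  let ?m = "n div 3"
  note classes = three_decomposable_with_classes[OF dec]
  have sub: "{..<?m} \<subseteq> {..<n}" "{?m..<2 * ?m} \<subseteq> {..<n}" "{2 * ?m..<n} \<subseteq> {..<n}"
    "{..<2 * ?m} \<subseteq> {..<n}"
    by auto
  interpret three_class_sweep n R k ?m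
  proof
    show "3 * ?m = n" by (fact classes(1))
  next
    fix t t'
    assume "t < n choose 2" "t' < n choose 2"
      and "between {..<?m} {?m..<2 * ?m} {swap_lo t, swap_hi t}"
      and "between {2 * ?m..<n} {..<2 * ?m} {swap_lo t', swap_hi t'}"
    then show "t < t'"
      using classes(6)[unfolded classes(5), unfolded classes(2-4)]
        relabelled_between[OF inj P_eq] sub by simp
  qed
  have "{t. t < n choose 2 \<and> is_itransp P t i \<and> bichromatic A B C (swapped P t)}
      = {s. s < n choose 2 \<and> Suc (k s) = i \<and>
           bichromatic {..<?m} {?m..<2 * ?m} {2 * ?m..<n} {swap_lo s, swap_hi s}}"
    unfolding classes(2-4)
    using relabelled_transpositions(2)[OF inj P_eq] relabelled_bichromatic[OF inj P_eq _ sub(1-3)]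
    by auto
  then show ?thesis
    using card_bichromatic_swaps_at_cut i by simp
qed

theorem lemma1:
  fixes P :: "'a list list" and A B C :: "'a set"
  assumes "half_period 30 P"
    and "three_decomposable_with 30 P A B C"
  shows "N_bi 30 15 P A B C = 15"
proof -
  have "critical 30 15 P t \<longleftrightarrow> is_itransp P t 15" for t
    by (simp add: critical_def)
  then have "N_bi 30 15 P A B C
      = card {t. t < 30 choose 2 \<and> is_itransp P t 15 \<and> bichromatic A B C (swapped P t)}"
    by (simp add: N_bi_def)
  also have "\<dots> = 15"
    using card_bichromatic_transpositions[OF assms] by simp
  finally show ?thesis .
qed

end
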